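(* Let $\boldsymbol{P}$ be a feasible policy (as defined in the context). If the graph $\mathcal{G}_{\boldsymbol{P}}$ of $\boldsymbol{P}$ is connected, then the graph $\mathcal{G}_{\boldsymbol{Y}}$ of $\boldsymbol{Y}_{\boldsymbol{P}}$ is also connected.
   Context: For an $n\times n$ matrix $\boldsymbol{A}=[a_{i,m}]$, its graph $\mathcal{G}_{\boldsymbol{A}}$ has vertex set $\{1,\dots,n\}$ and an edge from $m$ to $i$ iff $a_{i,m}\ne0$; it is connected if there is a path between every pair of vertices. Setting: $M\ge2$ worker nodes, undirected graph with neighborhood indicators $d_{i,m}\in\{0,1\}$. $\boldsymbol{P}=[p_{i,m}]_{M\times M}$ has rows that are probability distributions; $t_{i,m}>0$ are iteration times; $\alpha>0$, $\rho>0$. Define $\overline{t}_i=\sum_m t_{i,m}p_{i,m}d_{i,m}$, $p_i=\frac{1/\overline{t}_i}{\sum_m 1/\overline{t}_m}$, $\gamma_{i,m}=\frac{d_{i,m}+d_{m,i}}{2p_{i,m}}$ (terms with $p_{i,m}=0$ taken as $0$). $\boldsymbol{Y}_{\boldsymbol{P}}=[y_{i,m}]$ with $y_{i,i}=1-2\alpha\rho\sum_{m\ne i}p_ip_{i,m}\gamma_{i,m}+\alpha^2\rho^2\sum_{m\ne i}(p_ip_{i,m}\gamma_{i,m}^2+p_mp_{m,i}\gamma_{m,i}^2)$ and, for $m\ne i$, $y_{i,m}=\alpha\rho(p_ip_{i,m}\gamma_{i,m}+p_mp_{m,i}\gamma_{m,i})-\alpha^2\rho^2(p_ip_{i,m}\gamma_{i,m}^2+p_mp_{m,i}\gamma_{m,i}^2)$.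 $\boldsymbol{P}$ is feasible if: there is $\overline{t}$ with $\overline{t}=\frac1M\sum_m t_{i,m}p_{i,m}d_{i,m}$ for all $i$; $p_{i,m}>\alpha\rho(d_{i,m}+d_{m,i})$ for all $i\ne m$ with $d_{i,m}\ne0$; $p_{i,m}=0$ whenever $d_{i,m}=0$; and $\sum_m p_{i,m}=1$ for all $i$. *)

theory Defs
  imports Complex_Main
begin

text \<open>Matrices are n x n with indices 0..<n, represented as functions nat => nat => real;
  entry A i m is a_{i,m}. The graph of A has vertex set {0..<n} and an edge m -> i iff a_{i,m} \<noteq> 0.\<close>

definition mat_graph :: "nat \<Rightarrow> (nat \<Rightarrow> nat \<Rightarrow> real) \<Rightarrow> (nat \<times> nat) set" where
  "mat_graph n A = {(m, i). m < n \<and> i < n \<and> A i m \<noteq> 0}"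

definition graph_connected :: "nat \<Rightarrow> (nat \<Rightarrow> nat \<Rightarrow> real) \<Rightarrow> bool" where
  "graph_connected n A \<longleftrightarrow> (\<forall>i<n. \<forall>j<n. (i, j) \<in> (mat_graph n A)\<^sup>*)"

definition tbar :: "nat \<Rightarrow> (nat \<Rightarrow> nat \<Rightarrow> real) \<Rightarrow> (nat \<Rightarrow> nat \<Rightarrow> real) \<Rightarrow> (nat \<Rightarrow> nat \<Rightarrow> real) \<Rightarrow> nat \<Rightarrow> real" where
  "tbar M t d P i = (\<Sum>m<M. t i m * P i m * d i m)"

definition pnode :: "nat \<Rightarrow> (nat \<Rightarrow> nat \<Rightarrow> real) \<Rightarrow> (nat \<Rightarrow> nat \<Rightarrow> real) \<Rightarrow> (nat \<Rightarrow> nat \<Rightarrow> real) \<Rightarrow> nat \<Rightarrow> real" where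
  "pnode M t d P i = (1 / tbar M t d P i) / (\<Sum>m<M. 1 / tbar M t d P m)"

definition gam :: "(nat \<Rightarrow> nat \<Rightarrow> real) \<Rightarrow> (nat \<Rightarrow> nat \<Rightarrow> real) \<Rightarrow> nat \<Rightarrow> nat \<Rightarrow> real" where
  "gam d P i m = (if P i m = 0 then 0 else (d i m + d m i) / (2 * P i m))"

definition Ymat :: "nat \<Rightarrow> (nat \<Rightarrow> nat \<Rightarrow> real) \<Rightarrow> (nat \<Rightarrow> nat \<Rightarrow> real) \<Rightarrow> real \<Rightarrow> real \<Rightarrow> (nat \<Rightarrow> nat \<Rightarrow> real) \<Rightarrow> nat \<Rightarrow> nat \<Rightarrow> real" where
  "Ymat M t d \<alpha> \<rho> P i m =
    (let pn = pnode M t d P; g = gam d P in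
     if i = m then
       1 - 2 * \<alpha> * \<rho> * (\<Sum>k\<in>{..<M} - {i}. pn i * P i k * g i k)
         + \<alpha>^2 * \<rho>^2 * (\<Sum>k\<in>{..<M} - {i}. pn i * P i k * (g i k)^2 + pn k * P k i * (g k i)^2)
     else
       \<alpha> * \<rho> * (pn i * P i m * g i m + pn m * P m i * g m i)
         - \<alpha>^2 * \<rho>^2 * (pn i * P i m * (g i m)^2 + pn m * P m i * (g m i)^2))"

definition feasible :: "nat \<Rightarrow> (nat \<Rightarrow> nat \<Rightarrow> real) \<Rightarrow> (nat \<Rightarrow> nat \<Rightarrow> real) \<Rightarrow> real \<Rightarrow> real \<Rightarrow> (nat \<Rightarrow> nat \<Rightarrow> real) \<Rightarrow> bool" where
  "feasible M t d \<alpha> \<rho> P \<longleftrightarrow>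
     (\<exists>tb. \<forall>i<M. tb = (1 / real M) * (\<Sum>m<M. t i m * P i m * d i m))
   \<and> (\<forall>i<M. \<forall>m<M. i \<noteq> m \<and> d i m \<noteq> 0 \<longrightarrow> P i m > \<alpha> * \<rho> * (d i m + d m i))
   \<and> (\<forall>i<M. \<forall>m<M. d i m = 0 \<longrightarrow> P i m = 0)
   \<and> (\<forall>i<M. (\<Sum>m<M. P i m) = 1)"

end

theory Submission
  imports Defs
begin

text \<open>An off-diagonal edge \<open>p(i,m) \<noteq> 0\<close> of \<open>P\<close> forces \<open>d(i,m) = d(m,i) = 1\<close>, so
  feasibility gives \<open>p(i,m), p(m,i) > 2\<alpha>\<rho>\<close> and \<open>\<gamma>(i,m) = 1/p(i,m)\<close>. Then
  \<open>y(i,m) = \<alpha>\<rho> (p\<^sub>i (1 - \<alpha>\<rho>/p(i,m)) + p\<^sub>m (1 - \<alpha>\<rho>/p(m,i))) > 0\<close>, the node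
  probabilities \<open>p\<^sub>i, p\<^sub>m\<close> being positive because the edge makes the mean iteration times of \<open>i\<close> and
  \<open>m\<close> positive. So the graph of \<open>Y\<^sub>P\<close> contains all edges of the graph of \<open>P\<close> except loops, and
  loops do not affect connectivity.\<close>

lemma graph_connected_mono:
  assumes "graph_connected n A"
    and "\<And>i m. i < n \<Longrightarrow> m < n \<Longrightarrow> i \<noteq> m \<Longrightarrow> A i m \<noteq> 0 \<Longrightarrow> B i m \<noteq> 0"
  shows "graph_connected n B"
proof -
  have "mat_graph n A \<subseteq> mat_graph n B \<union> Id"
    unfolding mat_graph_def using assms(2) by auto
  then have "(mat_graph n A)\<^sup>* \<subseteq> (mat_graph n B \<union> Id)\<^sup>*"
    by (rule rtrancl_mono)
  also have "\<dots> = (mat_graph n B)\<^sup>*"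
    by simp
  finally show ?thesis
    using assms(1) unfolding graph_connected_def by blast
qed

lemma tbar_nonneg:
  assumes "\<And>m. m < M \<Longrightarrow> t k m \<ge> 0 \<and> P k m \<ge> 0 \<and> d k m \<ge> 0"
  shows "tbar M t d P k \<ge> 0"
  unfolding tbar_def using assms by (intro sum_nonneg) simp

lemma tbar_pos:
  assumes "\<And>m. m < M \<Longrightarrow> t k m \<ge> 0 \<and> P k m \<ge> 0 \<and> d k m \<ge> 0"
    and "m < M" and "t k m > 0" and "P k m > 0" and "d k m > 0"
  shows "tbar M t d P k > 0"
proof -
  have "0 < t k m * P k m * d k m"
    using assms(3-5) by simp
  also have "\<dots> \<le> tbar M t d P k"
    unfolding tbar_def using assms(1,2) by (intro member_le_sum) auto
  finally show ?thesis .
qed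

lemma pnode_pos:
  assumes "\<And>m. m < M \<Longrightarrow> tbar M t d P m \<ge> 0"
    and "k < M" and "tbar M t d P k > 0"
  shows "pnode M t d P k > 0"
proof -
  have "0 < 1 / tbar M t d P k"
    using assms(3) by simp
  also have "\<dots> \<le> (\<Sum>m<M. 1 / tbar M t d P m)"
    using assms(1,2) by (intro member_le_sum) auto
  finally show ?thesis
    unfolding pnode_def using assms(3) by simp
qed

lemma Ymat_offdiag_eq:
  assumes "i \<noteq> m" and "d i m = 1" and "d m i = 1" and "P i m \<noteq> 0" and "P m i \<noteq> 0"
  shows "Ymat M t d \<alpha> \<rho> P i m =
    \<alpha> * \<rho> * (pnode M t d P i * (1 - \<alpha> * \<rho> / P i m) + pnode M t d P m * (1 - \<alpha> * \<rho> / P m i))"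
proof -
  have "gam d P i m = 1 / P i m" and "gam d P m i = 1 / P m i"
    unfolding gam_def using assms(2-5) by simp_all
  then have "Ymat M t d \<alpha> \<rho> P i m =
      \<alpha> * \<rho> * (pnode M t d P i * P i m * (1 / P i m) + pnode M t d P m * P m i * (1 / P m i))
      - \<alpha>\<^sup>2 * \<rho>\<^sup>2 * (pnode M t d P i * P i m * (1 / P i m)\<^sup>2 + pnode M t d P m * P m i * (1 / P m i)\<^sup>2)"
    unfolding Ymat_def Let_def using assms(1) by simp
  also have "\<dots> = \<alpha> * \<rho> * (pnode M t d P i * (1 - \<alpha> * \<rho> / P i m) + pnode M t d P m * (1 - \<alpha> * \<rho> / P m i))"
    using assms(4,5) by (simp add: field_simps power2_eq_square)
  finally show ?thesis .
qed

lemma Ymat_offdiag_pos: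
  assumes "i \<noteq> m" and "d i m = 1" and "d m i = 1" and "\<alpha> * \<rho> > 0"
    and "P i m > \<alpha> * \<rho>" and "P m i > \<alpha> * \<rho>"
    and "pnode M t d P i > 0" and "pnode M t d P m > 0"
  shows "Ymat M t d \<alpha> \<rho> P i m > 0"
proof -
  have "\<alpha> * \<rho> / P i m < 1" and "\<alpha> * \<rho> / P m i < 1"
    using assms(4-6) by simp_all
  then have "0 < pnode M t d P i * (1 - \<alpha> * \<rho> / P i m) + pnode M t d P m * (1 - \<alpha> * \<rho> / P m i)"
    using assms(7,8) by (intro add_pos_pos mult_pos_pos) simp_all
  moreover have "P i m \<noteq> 0" and "P m i \<noteq> 0"
    using assms(4-6) by auto
  ultimately show ?thesis
    using assms(4) Ymat_offdiag_eq[OF assms(1-3)] by (simp add: mult_pos_pos)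
qed

lemma feasible_edge:
  assumes "feasible M t d \<alpha> \<rho> P"
    and "\<forall>i<M. \<forall>m<M. d i m = 0 \<or> d i m = 1"
    and "\<forall>i<M. \<forall>m<M. d i m = d m i"
    and "i < M" and "m < M" and "i \<noteq> m" and "P i m \<noteq> 0"
  shows "d i m = 1" and "d m i = 1"
    and "P i m > 2 * (\<alpha> * \<rho>)" and "P m i > 2 * (\<alpha> * \<rho>)"
proof -
  have bound: "\<forall>i<M. \<forall>m<M. i \<noteq> m \<and> d i m \<noteq> 0 \<longrightarrow> P i m > \<alpha> * \<rho> * (d i m + d m i)"
    and support: "\<forall>i<M. \<forall>m<M. d i m = 0 \<longrightarrow> P i m = 0"
    using assms(1) unfolding feasible_def by blast+
  show dim: "d i m = 1"
    using support assms(2,4,5,7) by blast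
  then show dmi: "d m i = 1"
    using assms(3-5) by metis
  have "P i m > \<alpha> * \<rho> * (d i m + d m i)"
    using bound[rule_format, of i m] assms(4-6) dim by simp
  moreover have "P m i > \<alpha> * \<rho> * (d m i + d i m)"
    using bound[rule_format, of m i] assms(4,5) assms(6)[symmetric] dmi by simp
  ultimately show "P i m > 2 * (\<alpha> * \<rho>)" and "P m i > 2 * (\<alpha> * \<rho>)"
    using dim dmi by simp_all
qed

theorem lemma3:
  fixes M :: nat and d t P :: "nat \<Rightarrow> nat \<Rightarrow> real" and \<alpha> \<rho> :: real
  assumes "M \<ge> 2"
    and "\<forall>i<M. \<forall>m<M. d i m = 0 \<or> d i m = 1"
    and "\<forall>i<M. \<forall>m<M. d i m = d m i"
    and "\<forall>i<M. \<forall>m<M. P i m \<ge> 0"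
    and "\<forall>i<M. \<forall>m<M. t i m > 0"
    and "\<alpha> > 0" and "\<rho> > 0"
    and "feasible M t d \<alpha> \<rho> P"
    and "graph_connected M P"
  shows "graph_connected M (Ymat M t d \<alpha> \<rho> P)"
proof (rule graph_connected_mono[OF assms(9)])
  have entries_nonneg: "t k m \<ge> 0 \<and> P k m \<ge> 0 \<and> d k m \<ge> 0" if "k < M" "m < M" for k m
    using assms(2,4,5) that by force
  have tbars_nonneg: "tbar M t d P k \<ge> 0" if "k < M" for k
    using tbar_nonneg entries_nonneg that by blast
  have \<alpha>\<rho>: "\<alpha> * \<rho> > 0"
    using assms(6,7) by simp
  fix i m
  assume edge: "i < M" "m < M" "i \<noteq> m" "P i m \<noteq> 0"
  note nbr = feasible_edge[OF assms(8,2,3) edge]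
  have "pnode M t d P k > 0" if "k < M" "l < M" "d k l = 1" "P k l > 2 * (\<alpha> * \<rho>)" for k l
    using that \<alpha>\<rho> assms(5) entries_nonneg tbars_nonneg
    by (intro pnode_pos tbar_pos[of M t k P d l]) auto
  with nbr edge have "pnode M t d P i > 0" and "pnode M t d P m > 0"
    by blast+
  moreover have "P i m > \<alpha> * \<rho>" and "P m i > \<alpha> * \<rho>"
    using nbr(3,4) \<alpha>\<rho> by linarith+
  ultimately have "Ymat M t d \<alpha> \<rho> P i m > 0"
    using Ymat_offdiag_pos[OF \<open>i \<noteq> m\<close> nbr(1,2) \<alpha>\<rho>] by blast
  then show "Ymat M t d \<alpha> \<rho> P i m \<noteq> 0"
    by simp
qed

end
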